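(* Let $Q$ be a $\Sigma$-uniformized query with hypergraph $\mathcal{H}=(V,E)$, input size $n$, $p$ machines, and let $\Delta>0$. Let $\psi$ be the vector returned by the procedure Construct$(Q,\Delta)$. Then (1) $|\psi|_1\le 1$; (2) the vertex weight mapping $\mathbf{V}(\psi)/\Delta$ is consistent with $Q$; (3) $|\mathbf{V}(\psi)|_1\le\kappa(\mathcal{H})$.
   Context: A natural join query $Q$ is a set of relations (distinct schemas) with hypergraph $\mathcal{H}=(V,E)$, $V=\bigcup_R\mathrm{vars}(R)$, $E=\{\mathrm{vars}(R)\}$. $\mathcal{H}[S]$ has vertex set $S$ and edges $\{S\cap e: e\in E, S\cap e\ne\emptyset\}$; $\mathsf{red}$ removes every edge strictly contained in another; $\tau^*$ is the minimum fractional vertex cover value; $\kappa(\mathcal{H})=\max_{S\subseteq V}\tau^*(\mathsf{red}(\mathcal{H}[S]))$. $\deg_R(Y\mid X)=\max_{\mathbf{x}}|\pi_Y\sigma_{X=\mathbf{x}}R|$. A constraint set for $R$ is $\sigma_R:\mathcal{P}(\mathrm{vars}(R))\to\mathbb{R}_{\ge0}$; $R$ satisfies it if $\deg_R(Y\mid X)\le2\sigma_R(X)/\sigma_R(Y)$ for all $X\subseteq Y\subseteq\mathrm{vars}(R)$; $Q$ is $\Sigma$-uniformized ($\Sigma=\{\sigma_R\}_{R\in Q}$) if each $R$ satisfies $\sigma_R$. A vertex weight mapping is $\mathbf{v}:V\to\mathbb{R}_{\ge0}$. For $R\in Q$ and $U\subseteq\mathrm{vars}(R)$: $U$ is heavy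 in $R$ if $\sigma_R(U)\ge n/p^{\sum_{i\in U}v_i}$, light if $\sigma_R(U)< n/p^{\sum_{i\in U}v_i}$, consistent if $\sigma_R(U)\le n/p^{\sum_{i\in U}v_i}$. $\mathbf{v}$ is consistent with $Q$ if every $U\subseteq\mathrm{vars}(R)$ is consistent in $R$ for every $R\in Q$. $H[\mathbf{v}]$ is the union of all sets $U$ such that $U$ is heavy in some $R\in Q$. For each $U\subseteq V$ fix a minimum fractional vertex cover $\mathbf{v}^*_U$ of $\mathsf{red}(\mathcal{H}[U])$ (a vector on $V$, zero outside $U$). For $\psi=(\psi_U)_{U\in\mathcal{P}(V)}$, $\mathbf{V}(\psi)=\sum_U\psi_U\mathbf{v}^*_U$ and $|\psi|_1=\sum_U\psi_U$. Construct$(Q,\Delta)$: set $\psi\gets\mathbf{0}$; while $|\psi|_1<1$ and $H[\mathbf{V}(\psi)/\Delta]\ne V$: let $L=V\setminus H[\mathbf{V}(\psi)/\Delta]$ and set $\psi_L$ to the largest $\delta\in(0,1-|\psi|_1]$ such that $Q$ is consistent with $(\mathbf{V}(\psi)+\delta\mathbf{v}^*_L)/\Delta$; return $\psi$.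
   Formalization: Each constraint value $\sigma_R(U)$, for $R\in Q$ and $U\subseteq\mathrm{vars}(R)$, is also bounded by the input size n, so Q is consistent with the zero vertex weight mapping. The statement above fails without it. *)

theory Defs
  imports Complex_Main
begin

text \<open>A query is given by its finite set of schemas E (the hyperedges; schemas are
distinct, so each relation is identified with its schema e) and a map R assigning to each
schema e its relation R e, a set of tuples. A tuple is a function from attributes to values;
only its values on e matter.\<close>

definition proj :: "'v set \<Rightarrow> ('v \<Rightarrow> 'd) \<Rightarrow> ('v \<Rightarrow> 'd)" where
  "proj Y t = (\<lambda>x. if x \<in> Y then t x else undefined)"

definition deg :: "('v \<Rightarrow> 'd) set \<Rightarrow> 'v set \<Rightarrow> 'v set \<Rightarrow> nat" where
  "deg Rl Y X = Max ({card (proj Y ` {t \<in> Rl. proj X t = proj X s}) | s. s \<in> Rl} \<union> {0})"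

definition satisfies :: "('v \<Rightarrow> 'd) set \<Rightarrow> 'v set \<Rightarrow> ('v set \<Rightarrow> real) \<Rightarrow> bool" where
  "satisfies Rl e sig \<longleftrightarrow>
     (\<forall>X Y. X \<subseteq> Y \<and> Y \<subseteq> e \<longrightarrow> real (deg Rl Y X) \<le> 2 * sig X / sig Y)"

definition uniformized ::
  "'v set set \<Rightarrow> ('v set \<Rightarrow> ('v \<Rightarrow> 'd) set) \<Rightarrow> ('v set \<Rightarrow> 'v set \<Rightarrow> real) \<Rightarrow> bool" where
  "uniformized E R \<Sigma> \<longleftrightarrow> (\<forall>e\<in>E. satisfies (R e) e (\<Sigma> e))"

definition induced :: "'v set set \<Rightarrow> 'v set \<Rightarrow> 'v set set" where
  "induced E S = {S \<inter> e | e. e \<in> E \<and> S \<inter> e \<noteq> {}}"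

definition red :: "'v set set \<Rightarrow> 'v set set" where
  "red F = {f \<in> F. \<not> (\<exists>g\<in>F. f \<subset> g)}"

definition is_fvc :: "'v set \<Rightarrow> 'v set set \<Rightarrow> ('v \<Rightarrow> real) \<Rightarrow> bool" where
  "is_fvc S F w \<longleftrightarrow> (\<forall>x\<in>S. 0 \<le> w x) \<and> (\<forall>f\<in>F. (\<Sum>x\<in>f. w x) \<ge> 1)"

definition tau_star :: "'v set \<Rightarrow> 'v set set \<Rightarrow> real" where
  "tau_star S F = Inf {(\<Sum>x\<in>S. w x) | w. is_fvc S F w}"

definition is_min_fvc :: "'v set \<Rightarrow> 'v set set \<Rightarrow> ('v \<Rightarrow> real) \<Rightarrow> bool" where
  "is_min_fvc S F w \<longleftrightarrow> is_fvc S F w \<and> (\<forall>w'. is_fvc S F w' \<longrightarrow> (\<Sum>x\<in>S. w x) \<le> (\<Sum>x\<in>S. w' x))"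

definition kappa :: "'v set set \<Rightarrow> real" where
  "kappa E = Max {tau_star S (red (induced E S)) | S. S \<subseteq> \<Union>E}"

definition wsum :: "('v \<Rightarrow> real) \<Rightarrow> 'v set \<Rightarrow> real" where
  "wsum v U = (\<Sum>i\<in>U. v i)"

definition heavy :: "('v set \<Rightarrow> 'v set \<Rightarrow> real) \<Rightarrow> real \<Rightarrow> nat \<Rightarrow> ('v \<Rightarrow> real) \<Rightarrow> 'v set \<Rightarrow> 'v set \<Rightarrow> bool" where
  "heavy \<Sigma> n p v e U \<longleftrightarrow> \<Sigma> e U \<ge> n / (real p) powr (wsum v U)"

definition light :: "('v set \<Rightarrow> 'v set \<Rightarrow> real) \<Rightarrow> real \<Rightarrow> nat \<Rightarrow> ('v \<Rightarrow> real) \<Rightarrow> 'v set \<Rightarrow> 'v set \<Rightarrow> bool" where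
  "light \<Sigma> n p v e U \<longleftrightarrow> \<Sigma> e U < n / (real p) powr (wsum v U)"

definition consistent_set :: "('v set \<Rightarrow> 'v set \<Rightarrow> real) \<Rightarrow> real \<Rightarrow> nat \<Rightarrow> ('v \<Rightarrow> real) \<Rightarrow> 'v set \<Rightarrow> 'v set \<Rightarrow> bool" where
  "consistent_set \<Sigma> n p v e U \<longleftrightarrow> \<Sigma> e U \<le> n / (real p) powr (wsum v U)"

definition consistent :: "'v set set \<Rightarrow> ('v set \<Rightarrow> 'v set \<Rightarrow> real) \<Rightarrow> real \<Rightarrow> nat \<Rightarrow> ('v \<Rightarrow> real) \<Rightarrow> bool" where
  "consistent E \<Sigma> n p v \<longleftrightarrow> (\<forall>e\<in>E. \<forall>U. U \<subseteq> e \<longrightarrow> consistent_set \<Sigma> n p v e U)"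

definition heavy_part :: "'v set set \<Rightarrow> ('v set \<Rightarrow> 'v set \<Rightarrow> real) \<Rightarrow> real \<Rightarrow> nat \<Rightarrow> ('v \<Rightarrow> real) \<Rightarrow> 'v set" where
  "heavy_part E \<Sigma> n p v = \<Union>{U. \<exists>e\<in>E. U \<subseteq> e \<and> heavy \<Sigma> n p v e U}"

text \<open>psi is indexed by subsets of V; vstar U is the fixed minimum fractional vertex cover
of red(H[U]).\<close>

definition Vmap :: "'v set \<Rightarrow> ('v set \<Rightarrow> 'v \<Rightarrow> real) \<Rightarrow> ('v set \<Rightarrow> real) \<Rightarrow> 'v \<Rightarrow> real" where
  "Vmap V vstar \<psi> = (\<lambda>x. \<Sum>U\<in>Pow V. \<psi> U * vstar U x)"

definition norm1 :: "'v set \<Rightarrow> ('v set \<Rightarrow> real) \<Rightarrow> real" where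
  "norm1 V \<psi> = (\<Sum>U\<in>Pow V. \<psi> U)"

definition scale :: "real \<Rightarrow> ('v \<Rightarrow> real) \<Rightarrow> 'v \<Rightarrow> real" where
  "scale \<Delta> v = (\<lambda>x. v x / \<Delta>)"

definition loop_cond ::
  "'v set set \<Rightarrow> ('v set \<Rightarrow> 'v set \<Rightarrow> real) \<Rightarrow> real \<Rightarrow> nat \<Rightarrow> real \<Rightarrow> ('v set \<Rightarrow> 'v \<Rightarrow> real)
   \<Rightarrow> ('v set \<Rightarrow> real) \<Rightarrow> bool" where
  "loop_cond E \<Sigma> n p \<Delta> vstar \<psi> \<longleftrightarrow>
     norm1 (\<Union>E) \<psi> < 1 \<and>
     heavy_part E \<Sigma> n p (scale \<Delta> (Vmap (\<Union>E) vstar \<psi>)) \<noteq> \<Union>E"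

text \<open>One iteration of the while loop: L is the set of light vertices, delta the largest
admissible value (the step is only possible if such a largest value exists).\<close>
definition construct_step ::
  "'v set set \<Rightarrow> ('v set \<Rightarrow> 'v set \<Rightarrow> real) \<Rightarrow> real \<Rightarrow> nat \<Rightarrow> real \<Rightarrow> ('v set \<Rightarrow> 'v \<Rightarrow> real)
   \<Rightarrow> ('v set \<Rightarrow> real) \<Rightarrow> ('v set \<Rightarrow> real) \<Rightarrow> bool" where
  "construct_step E \<Sigma> n p \<Delta> vstar \<psi> \<psi>' \<longleftrightarrow>
     loop_cond E \<Sigma> n p \<Delta> vstar \<psi> \<and>
     (let V = \<Union>E;
          L = V - heavy_part E \<Sigma> n p (scale \<Delta> (Vmap V vstar \<psi>))
      in \<exists>\<delta>. is_arg_max id (\<lambda>d. 0 < d \<and> d \<le> 1 - norm1 V \<psi> \<and>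
                 consistent E \<Sigma> n p
                   (scale \<Delta> (\<lambda>x. Vmap V vstar \<psi> x + d * vstar L x))) \<delta>
             \<and> \<psi>' = \<psi>(L := \<delta>))"

definition construct_returns ::
  "'v set set \<Rightarrow> ('v set \<Rightarrow> 'v set \<Rightarrow> real) \<Rightarrow> real \<Rightarrow> nat \<Rightarrow> real \<Rightarrow> ('v set \<Rightarrow> 'v \<Rightarrow> real)
   \<Rightarrow> ('v set \<Rightarrow> real) \<Rightarrow> bool" where
  "construct_returns E \<Sigma> n p \<Delta> vstar \<psi> \<longleftrightarrow>
     (construct_step E \<Sigma> n p \<Delta> vstar)\<^sup>*\<^sup>* (\<lambda>_. 0) \<psi> \<and>
     \<not> loop_cond E \<Sigma> n p \<Delta> vstar \<psi>"

end

theory Submission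
  imports Defs
begin

text \<open>Construct only ever raises a vertex weight mapping as far as consistency allows, so
the invariant ``\<open>\<psi> \<ge> 0\<close>, \<open>|\<psi>|\<^sub>1 \<le> 1\<close> and \<open>V(\<psi>)/\<Delta>\<close> consistent'' holds at every iteration:
consistency is antimonotone in the weights, and overwriting a coordinate \<open>\<psi>\<^sub>L\<close> by the chosen
\<open>\<delta>\<close> adds at most \<open>\<delta> v\<^sup>*\<^sub>L\<close>. For the bound on \<open>|V(\<psi>)|\<^sub>1\<close>, each \<open>v\<^sup>*\<^sub>U\<close> has total weight
\<open>\<tau>\<^sup>*(red(H[U])) \<le> \<kappa>(H)\<close>, so \<open>V(\<psi>)\<close>, a combination of them with nonnegative coefficients of
total mass at most 1, has total weight at most \<open>\<kappa>(H)\<close>.\<close>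

lemma consistent_antimono:
  assumes "consistent E \<Sigma> n p v" and "\<forall>x\<in>\<Union>E. w x \<le> v x" and "0 \<le> n" and "1 \<le> p"
  shows "consistent E \<Sigma> n p w"
  unfolding consistent_def consistent_set_def
proof (intro ballI allI impI)
  fix e U assume e: "e \<in> E" and U: "U \<subseteq> e"
  have "wsum w U \<le> wsum v U"
    unfolding wsum_def by (rule sum_mono) (use e U assms(2) in blast)
  then have "real p powr wsum w U \<le> real p powr wsum v U"
    by (rule powr_mono) (use assms(4) in simp)
  then have "n / real p powr wsum v U \<le> n / real p powr wsum w U"
    using assms(3,4) by (intro divide_left_mono) auto
  moreover have "\<Sigma> e U \<le> n / real p powr wsum v U"
    using assms(1) e U unfolding consistent_def consistent_set_def by blast
  ultimately show "\<Sigma> e U \<le> n / real p powr wsum w U" by linarith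
qed

lemma sum_fun_upd_mult:
  fixes \<psi> c :: "'a \<Rightarrow> 'b::comm_ring"
  assumes "finite A" and "a \<in> A"
  shows "(\<Sum>U\<in>A. (\<psi>(a := d)) U * c U) = (\<Sum>U\<in>A. \<psi> U * c U) + (d - \<psi> a) * c a"
proof -
  have "(\<Sum>U\<in>A. (\<psi>(a := d)) U * c U) = d * c a + (\<Sum>U\<in>A - {a}. \<psi> U * c U)"
    using assms by (simp add: sum.remove)
  also have "\<dots> = (\<Sum>U\<in>A. \<psi> U * c U) + (d - \<psi> a) * c a"
    using assms by (simp add: sum.remove algebra_simps)
  finally show ?thesis .
qed

lemma norm1_fun_upd:
  assumes "finite V" and "L \<subseteq> V"
  shows "norm1 V (\<psi>(L := d)) = norm1 V \<psi> + (d - \<psi> L)"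
  using sum_fun_upd_mult[of "Pow V" L \<psi> d "\<lambda>_. 1"] assms by (simp add: norm1_def)

lemma Vmap_fun_upd:
  assumes "finite V" and "L \<subseteq> V"
  shows "Vmap V vstar (\<psi>(L := d)) x = Vmap V vstar \<psi> x + (d - \<psi> L) * vstar L x"
  using sum_fun_upd_mult[of "Pow V" L \<psi> d "\<lambda>U. vstar U x"] assms by (simp add: Vmap_def)

definition construct_invariant ::
  "'v set set \<Rightarrow> ('v set \<Rightarrow> 'v set \<Rightarrow> real) \<Rightarrow> real \<Rightarrow> nat \<Rightarrow> real \<Rightarrow> ('v set \<Rightarrow> 'v \<Rightarrow> real)
   \<Rightarrow> ('v set \<Rightarrow> real) \<Rightarrow> bool" where
  "construct_invariant E \<Sigma> n p \<Delta> vstar \<psi> \<longleftrightarrow>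
     (\<forall>U. 0 \<le> \<psi> U) \<and> norm1 (\<Union>E) \<psi> \<le> 1 \<and>
     consistent E \<Sigma> n p (scale \<Delta> (Vmap (\<Union>E) vstar \<psi>))"

lemma construct_invariant_zero:
  assumes "\<forall>e\<in>E. \<forall>U. U \<subseteq> e \<longrightarrow> \<Sigma> e U \<le> n" and "1 \<le> p"
  shows "construct_invariant E \<Sigma> n p \<Delta> vstar (\<lambda>_. 0)"
  using assms
  by (simp add: construct_invariant_def norm1_def consistent_def consistent_set_def
      scale_def Vmap_def wsum_def)

lemma construct_step_preserves_invariant:
  assumes finV: "finite (\<Union>E)"
    and vstar_nonneg: "\<forall>U x. U \<subseteq> \<Union>E \<longrightarrow> 0 \<le> vstar U x"
    and "0 \<le> n" and "1 \<le> p" and "0 \<le> \<Delta>"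
    and step: "construct_step E \<Sigma> n p \<Delta> vstar \<psi> \<psi>'"
    and inv: "construct_invariant E \<Sigma> n p \<Delta> vstar \<psi>"
  shows "construct_invariant E \<Sigma> n p \<Delta> vstar \<psi>'"
proof -
  define V where "V = \<Union>E"
  define L where "L = V - heavy_part E \<Sigma> n p (scale \<Delta> (Vmap V vstar \<psi>))"
  obtain \<delta> where "is_arg_max id (\<lambda>d. 0 < d \<and> d \<le> 1 - norm1 V \<psi> \<and>
      consistent E \<Sigma> n p (scale \<Delta> (\<lambda>x. Vmap V vstar \<psi> x + d * vstar L x))) \<delta>"
    and \<psi>': "\<psi>' = \<psi>(L := \<delta>)"
    using step unfolding construct_step_def Let_def V_def L_def by blast
  then have \<delta>_pos: "0 < \<delta>" and \<delta>_le: "\<delta> \<le> 1 - norm1 V \<psi>"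
    and \<delta>_consistent: "consistent E \<Sigma> n p (scale \<Delta> (\<lambda>x. Vmap V vstar \<psi> x + \<delta> * vstar L x))"
    unfolding is_arg_max_def by auto
  have L: "L \<subseteq> V" unfolding L_def by blast
  have \<psi>_nonneg: "\<forall>U. 0 \<le> \<psi> U" and norm_\<psi>: "norm1 V \<psi> \<le> 1"
    using inv unfolding construct_invariant_def V_def by auto
  have "consistent E \<Sigma> n p (scale \<Delta> (Vmap V vstar \<psi>'))"
  proof (rule consistent_antimono[OF \<delta>_consistent _ \<open>0 \<le> n\<close> \<open>1 \<le> p\<close>], intro ballI)
    fix x
    have "(\<delta> - \<psi> L) * vstar L x \<le> \<delta> * vstar L x"
      using \<psi>_nonneg vstar_nonneg L by (simp add: V_def mult_right_mono)
    then show "scale \<Delta> (Vmap V vstar \<psi>') x \<le> scale \<Delta> (\<lambda>x. Vmap V vstar \<psi> x + \<delta> * vstar L x) x"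
      using \<open>0 \<le> \<Delta>\<close> finV L
      by (simp add: \<psi>' V_def Vmap_fun_upd scale_def divide_right_mono)
  qed
  moreover have "norm1 V \<psi>' \<le> 1"
    using \<delta>_le \<psi>_nonneg[rule_format, of L] finV L by (simp add: \<psi>' V_def norm1_fun_upd)
  moreover have "\<forall>U. 0 \<le> \<psi>' U"
    using \<psi>_nonneg \<delta>_pos by (simp add: \<psi>')
  ultimately show ?thesis
    unfolding construct_invariant_def V_def by blast
qed

lemma construct_reachable_invariant:
  assumes "finite (\<Union>E)"
    and "\<forall>U x. U \<subseteq> \<Union>E \<longrightarrow> 0 \<le> vstar U x"
    and "\<forall>e\<in>E. \<forall>U. U \<subseteq> e \<longrightarrow> \<Sigma> e U \<le> n"
    and "0 \<le> n" and "1 \<le> p" and "0 \<le> \<Delta>"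
    and "(construct_step E \<Sigma> n p \<Delta> vstar)\<^sup>*\<^sup>* (\<lambda>_. 0) \<psi>"
  shows "construct_invariant E \<Sigma> n p \<Delta> vstar \<psi>"
  using assms(7)
proof (induction rule: rtranclp_induct)
  case base
  show ?case using assms(3,5) by (rule construct_invariant_zero)
next
  case (step \<psi> \<psi>')
  then show ?case
    using construct_step_preserves_invariant assms(1,2,4-6) by blast
qed

lemma tau_star_eq_sum_if_min_fvc:
  assumes "is_min_fvc S F w"
  shows "tau_star S F = (\<Sum>x\<in>S. w x)"
  unfolding tau_star_def
  by (rule cInf_eq_minimum) (use assms in \<open>auto simp: is_min_fvc_def\<close>)

lemma tau_star_le_kappa:
  assumes "finite (\<Union>E)" and "S \<subseteq> \<Union>E"
  shows "tau_star S (red (induced E S)) \<le> kappa E"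
proof -
  have "{tau_star S (red (induced E S)) | S. S \<subseteq> \<Union>E} = (\<lambda>S. tau_star S (red (induced E S))) ` Pow (\<Union>E)"
    by auto
  then have "finite {tau_star S (red (induced E S)) | S. S \<subseteq> \<Union>E}"
    using assms(1) by simp
  then show ?thesis
    unfolding kappa_def using assms(2) by (intro Max_ge) auto
qed

lemma Vmap_l1_le:
  assumes "finite V"
    and \<psi>_nonneg: "\<forall>U. 0 \<le> \<psi> U"
    and vstar_nonneg: "\<forall>U x. U \<subseteq> V \<longrightarrow> 0 \<le> vstar U x"
    and vstar_zero: "\<forall>U x. x \<notin> U \<longrightarrow> vstar U x = 0"
    and vstar_le: "\<forall>U. U \<subseteq> V \<longrightarrow> (\<Sum>x\<in>U. vstar U x) \<le> k"
  shows "(\<Sum>x\<in>V. \<bar>Vmap V vstar \<psi> x\<bar>) \<le> k * norm1 V \<psi>"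
proof -
  have "(\<Sum>x\<in>V. \<bar>Vmap V vstar \<psi> x\<bar>) = (\<Sum>x\<in>V. \<Sum>U\<in>Pow V. \<psi> U * vstar U x)"
    unfolding Vmap_def using \<psi>_nonneg vstar_nonneg
    by (intro sum.cong refl abs_of_nonneg sum_nonneg) auto
  also have "\<dots> = (\<Sum>U\<in>Pow V. \<psi> U * (\<Sum>x\<in>V. vstar U x))"
    by (subst sum.swap) (simp add: sum_distrib_left)
  also have "\<dots> = (\<Sum>U\<in>Pow V. \<psi> U * (\<Sum>x\<in>U. vstar U x))"
    using \<open>finite V\<close> vstar_zero by (intro sum.cong refl arg_cong2[where f = "(*)"] sum.mono_neutral_right) auto
  also have "\<dots> \<le> (\<Sum>U\<in>Pow V. \<psi> U * k)"
    using vstar_le \<psi>_nonneg by (intro sum_mono mult_left_mono) auto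
  also have "\<dots> = k * norm1 V \<psi>"
    by (simp add: norm1_def sum_distrib_left mult.commute)
  finally show ?thesis .
qed

theorem lemma4p11:
  fixes E :: "'v set set"
    and R :: "'v set \<Rightarrow> ('v \<Rightarrow> 'd) set"
    and \<Sigma> :: "'v set \<Rightarrow> 'v set \<Rightarrow> real"
    and n :: real and p :: nat and \<Delta> :: real
    and vstar :: "'v set \<Rightarrow> 'v \<Rightarrow> real"
    and \<psi> :: "'v set \<Rightarrow> real"
  assumes finE: "finite E" and fin_edges: "\<forall>e\<in>E. finite e"
    and finR: "\<forall>e\<in>E. finite (R e)"
    and input_size: "n = (\<Sum>e\<in>E. real (card (R e)))"
    and p_pos: "p \<ge> 1"
    and unif: "uniformized E R \<Sigma>"
    and sigma_le_n: "\<forall>e\<in>E. \<forall>U. U \<subseteq> e \<longrightarrow> \<Sigma> e U \<le> n"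
    and Delta_pos: "\<Delta> > 0"
    and vstar_min: "\<forall>U. U \<subseteq> \<Union>E \<longrightarrow> is_min_fvc U (red (induced E U)) (vstar U)"
    and vstar_zero: "\<forall>U x. x \<notin> U \<longrightarrow> vstar U x = 0"
    and ret: "construct_returns E \<Sigma> n p \<Delta> vstar \<psi>"
  shows "norm1 (\<Union>E) \<psi> \<le> 1
    \<and> consistent E \<Sigma> n p (scale \<Delta> (Vmap (\<Union>E) vstar \<psi>))
    \<and> (\<Sum>x\<in>\<Union>E. \<bar>Vmap (\<Union>E) vstar \<psi> x\<bar>) \<le> kappa E"
proof -
  have finV: "finite (\<Union>E)" using finE fin_edges by blast
  have vstar_nonneg: "\<forall>U x. U \<subseteq> \<Union>E \<longrightarrow> 0 \<le> vstar U x"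
    using vstar_min vstar_zero unfolding is_min_fvc_def is_fvc_def by (metis order_refl)
  have vstar_le_kappa: "\<forall>U. U \<subseteq> \<Union>E \<longrightarrow> (\<Sum>x\<in>U. vstar U x) \<le> kappa E"
    using vstar_min tau_star_eq_sum_if_min_fvc tau_star_le_kappa[OF finV] by metis
  have "0 \<le> n" using input_size by (simp add: sum_nonneg)
  then have inv: "construct_invariant E \<Sigma> n p \<Delta> vstar \<psi>"
    using construct_reachable_invariant[OF finV vstar_nonneg sigma_le_n] p_pos Delta_pos ret
    unfolding construct_returns_def by simp
  then have "(\<Sum>x\<in>\<Union>E. \<bar>Vmap (\<Union>E) vstar \<psi> x\<bar>) \<le> kappa E * norm1 (\<Union>E) \<psi>"
    using Vmap_l1_le[OF finV _ vstar_nonneg vstar_zero vstar_le_kappa]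
    unfolding construct_invariant_def by blast
  also have "\<dots> \<le> kappa E"
  proof (rule mult_right_le_one_le)
    show "0 \<le> kappa E" using vstar_le_kappa by auto
    show "0 \<le> norm1 (\<Union>E) \<psi>" "norm1 (\<Union>E) \<psi> \<le> 1"
      using inv unfolding construct_invariant_def norm1_def by (auto intro: sum_nonneg)
  qed
  finally show ?thesis
    using inv unfolding construct_invariant_def by blast
qed

end
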